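(* Let $K_n$ ($n\ge1$) and $K$ be unconstrained Sierpinski carpets with the same $k,N$, generated by $\{\Psi_{n,i}\}_{i=1}^N$ and $\{\Psi_i\}_{i=1}^N$ respectively. (a) If $\Psi_{n,i}\to\Psi_i$ for each $1\le i\le N$ (in the finite-dimensional linear space of affine maps), then $K_n\to K$ in the Hausdorff metric. (b) Conversely, if $K_n\to K$ in the Hausdorff metric, then after reordering $\{\Psi_{n,i}\}_{i=1}^N$ for each $n$, one has $\Psi_{n,i}\to\Psi_i$ for each $1\le i\le N$.
   Context: USC: integers $k\ge3$, $4(k-1)\le N\le k^2-1$; maps $\Psi_i(x)=x/k+c_i$ on $\square=[0,1]^2$ with pairwise intersections of the $\Psi_i(\square)$ a segment, point or empty, $\bigcup_i\Psi_i(\square)$ connected and invariant under the 8 isometries of $\square$, $[0,1]\times\{0\}\subset\bigcup_i\Psi_i(\square)\subset\square$; $K=\bigcup_i\Psi_iK$. *)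

theory Defs
  imports "HOL-Analysis.Analysis"
begin

type_synonym pt = "real \<times> real"

definition unit_square :: "pt set" where
  "unit_square = cbox (0,0) (1,1)"

definition usc_map :: "nat \<Rightarrow> (nat \<Rightarrow> pt) \<Rightarrow> nat \<Rightarrow> pt \<Rightarrow> pt" where
  "usc_map k c i x = scaleR (1 / real k) x + c i"

definition square_isometries :: "(pt \<Rightarrow> pt) set" where
  "square_isometries =
     { (\<lambda>(x,y). (x,y)), (\<lambda>(x,y). (1-x,y)), (\<lambda>(x,y). (x,1-y)), (\<lambda>(x,y). (1-x,1-y)),
       (\<lambda>(x,y). (y,x)), (\<lambda>(x,y). (1-y,x)), (\<lambda>(x,y). (y,1-x)), (\<lambda>(x,y). (1-y,1-x)) }"

definition usc_cells :: "nat \<Rightarrow> nat \<Rightarrow> (nat \<Rightarrow> pt) \<Rightarrow> pt set" where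
  "usc_cells k N c = (\<Union>i<N. usc_map k c i ` unit_square)"

definition usc_ifs :: "nat \<Rightarrow> nat \<Rightarrow> (nat \<Rightarrow> pt) \<Rightarrow> bool" where
  "usc_ifs k N c \<longleftrightarrow>
     k \<ge> 3 \<and> 4 * (k - 1) \<le> N \<and> N \<le> k\<^sup>2 - 1 \<and>
     (\<forall>i<N. \<forall>j<N. i \<noteq> j \<longrightarrow>
        (let S = usc_map k c i ` unit_square \<inter> usc_map k c j ` unit_square in
           S = {} \<or> (\<exists>p. S = {p}) \<or> (\<exists>a b. a \<noteq> b \<and> S = closed_segment a b))) \<and>
     connected (usc_cells k N c) \<and>
     (\<forall>g\<in>square_isometries. g ` usc_cells k N c = usc_cells k N c) \<and>
     {0..1} \<times> {0} \<subseteq> usc_cells k N c \<and>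
     usc_cells k N c \<subseteq> unit_square"

definition usc_attractor :: "nat \<Rightarrow> nat \<Rightarrow> (nat \<Rightarrow> pt) \<Rightarrow> pt set \<Rightarrow> bool" where
  "usc_attractor k N c K \<longleftrightarrow>
     K \<noteq> {} \<and> compact K \<and> K = (\<Union>i<N. usc_map k c i ` K)"

definition hausdist :: "pt set \<Rightarrow> pt set \<Rightarrow> real" where
  "hausdist A B = max (SUP a\<in>A. infdist a B) (SUP b\<in>B. infdist b A)"

end

theory Submission
  imports Defs
begin

text \<open>
  (a) Both attractors are fixed points of the Hutchinson operators, which contract the Hausdorff
  distance by the factor 1/k and move a set by at most the distance between the translation
  vectors, so the Hausdorff distance of the attractors is at most k/(k-1) times the distance of
  the translation vectors.

  (b) For each n take the permutation matching the translation vectors of K_n best to those of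
  K. If its cost did not tend to 0, by compactness some subsequence of the translation families
  would converge to a family d, and passing to the limit in K_n = \<Union> \<Psi>_{n,i} K_n gives
  K = \<Union> (K/k + d_i); the family d inherits the 1/k-separation of the cells of a USC. Such a
  separated family is determined by K: the vector e of the symmetric difference of two such
  families with least coordinate sum is the lower left corner of the cell e + K/k, and the
  points of this cell close to e along the diagonal can only be covered by a cell of the other
  family whose vector is lower than e but closer than 1/k to it. Hence d is a permutation of the
  vectors of K, contradicting the choice of the subsequence.
\<close>

lemma nonneg_le_div_self_imp_zero:
  fixes x :: real
  assumes "0 \<le> x" "x \<le> x / real k" "2 \<le> k"
  shows "x = 0"
proof -
  have "x * real k \<le> x" using assms(2,3) by (simp add: le_divide_eq)
  then have "x * (real k - 1) \<le> 0" by (simp add: algebra_simps)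
  then show ?thesis using assms(1,3) by (simp add: mult_le_0_iff)
qed

lemma mem_closed_if_infdist_le_null:
  fixes A :: "'a::metric_space set"
  assumes "closed A" "A \<noteq> {}" "\<And>n. infdist p A \<le> b n" "b \<longlonglongrightarrow> 0"
  shows "p \<in> A"
proof -
  have "infdist p A \<le> 0"
    using assms(3) by (intro LIMSEQ_le_const[OF assms(4)]) auto
  then show ?thesis
    using infdist_nonneg[of p A] in_closed_iff_infdist_zero[OF assms(1,2)] by simp
qed

lemma finite_family_convergent_subseq:
  fixes f :: "nat \<Rightarrow> nat \<Rightarrow> 'a::topological_space"
  assumes S: "seq_compact S" and f: "\<And>n i. i < M \<Longrightarrow> f n i \<in> S"
  shows "\<exists>r l. strict_mono r \<and> (\<forall>i<M. (\<lambda>n. f (r n) i) \<longlonglongrightarrow> l i)"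
  using f
proof (induction M)
  case 0
  show ?case using strict_mono_id by blast
next
  case (Suc M)
  then obtain r l where r: "strict_mono r" and l: "\<forall>i<M. (\<lambda>n. f (r n) i) \<longlonglongrightarrow> l i"
    by auto
  have "\<forall>n. f (r n) M \<in> S" using Suc.prems by simp
  then obtain x r' where r': "strict_mono r'" and x: "((\<lambda>n. f (r n) M) \<circ> r') \<longlonglongrightarrow> x"
    using seq_compactE[OF S] by metis
  have "(\<lambda>n. f ((r \<circ> r') n) i) \<longlonglongrightarrow> (l(M := x)) i" if "i < Suc M" for i
  proof (cases "i = M")
    case True
    then show ?thesis using x by (simp add: o_def)
  next
    case False
    then have "i < M" using that by simp
    then have "((\<lambda>n. f (r n) i) \<circ> r') \<longlonglongrightarrow> l i"
      using l by (intro LIMSEQ_subseq_LIMSEQ[OF _ r']) blast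
    then show ?thesis using False by (simp add: o_def)
  qed
  then show ?case using strict_mono_o[OF r r'] by blast
qed

lemma LIMSEQ_if_subseqs_have_LIMSEQ_subseq:
  fixes X :: "nat \<Rightarrow> 'a::metric_space"
  assumes "\<And>r :: nat \<Rightarrow> nat. strict_mono r \<Longrightarrow>
    \<exists>r' :: nat \<Rightarrow> nat. strict_mono r' \<and> (X \<circ> r \<circ> r') \<longlonglongrightarrow> L"
  shows "X \<longlonglongrightarrow> L"
proof (rule ccontr)
  assume "\<not> X \<longlonglongrightarrow> L"
  then obtain \<epsilon> where "\<epsilon> > 0"
    and not_close: "\<not> eventually (\<lambda>n. dist (X n) L < \<epsilon>) sequentially"
    unfolding tendsto_iff by blast
  obtain r :: "nat \<Rightarrow> nat" where r: "strict_mono r" and far: "\<forall>n. \<not> dist (X (r n)) L < \<epsilon>"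
    using not_eventually_sequentiallyD[OF not_close] by blast
  obtain r' where "(X \<circ> r \<circ> r') \<longlonglongrightarrow> L" using assms[OF r] by blast
  then have "eventually (\<lambda>n. dist ((X \<circ> r \<circ> r') n) L < \<epsilon>) sequentially"
    using \<open>\<epsilon> > 0\<close> tendsto_iff by blast
  then show False using far unfolding eventually_sequentially by auto
qed

lemma permutation_matching_images:
  assumes c: "inj_on c A" and d: "inj_on d A" and images: "c ` A = d ` A"
  obtains \<tau> where "\<tau> permutes A" "\<And>i. i \<in> A \<Longrightarrow> d (\<tau> i) = c i"
proof
  define \<tau> where "\<tau> i = (if i \<in> A then inv_into A d (c i) else i)" for i
  have "bij_betw c A (d ` A)" using c images by (simp add: bij_betw_def)
  moreover have "bij_betw (inv_into A d) (d ` A) A"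
    using d by (rule bij_betw_inv_into[OF inj_on_imp_bij_betw])
  ultimately have "bij_betw (inv_into A d \<circ> c) A A" by (rule bij_betw_trans)
  then have "bij_betw \<tau> A A" by (rule bij_betw_cong[THEN iffD1, rotated]) (simp add: \<tau>_def)
  then show "\<tau> permutes A" by (rule bij_imp_permutes) (simp add: \<tau>_def)
  fix i assume "i \<in> A"
  then have "c i \<in> d ` A" using images by blast
  then show "d (\<tau> i) = c i" using \<open>i \<in> A\<close> by (simp add: \<tau>_def f_inv_into_f)
qed

lemma mem_unit_square_iff:
  "x \<in> unit_square \<longleftrightarrow> 0 \<le> fst x \<and> fst x \<le> 1 \<and> 0 \<le> snd x \<and> snd x \<le> 1"
  by (cases x) (auto simp: unit_square_def cbox_Pair_eq)

lemma mem_usc_cell_iff: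
  assumes "k > 0"
  shows "p \<in> usc_map k c i ` unit_square \<longleftrightarrow>
    fst (c i) \<le> fst p \<and> fst p \<le> fst (c i) + 1 / real k \<and>
    snd (c i) \<le> snd p \<and> snd p \<le> snd (c i) + 1 / real k"
    (is "_ \<longleftrightarrow> ?box")
proof
  assume "p \<in> usc_map k c i ` unit_square"
  then obtain x where "x \<in> unit_square" "p = (1 / real k) *\<^sub>R x + c i"
    by (auto simp: usc_map_def)
  then show ?box
    using assms by (auto simp: mem_unit_square_iff divide_simps)
next
  assume ?box
  then have "real k *\<^sub>R (p - c i) \<in> unit_square"
    using assms by (auto simp: mem_unit_square_iff field_simps)
  moreover have "p = usc_map k c i (real k *\<^sub>R (p - c i))"
    using assms by (simp add: usc_map_def)
  ultimately show "p \<in> usc_map k c i ` unit_square" by blast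
qed

lemma dist_usc_map_le:
  "dist (usc_map k a i x) (usc_map k b j y) \<le> dist x y / real k + dist (a i) (b j)"
proof -
  have "usc_map k a i x - usc_map k b j y = (1 / real k) *\<^sub>R (x - y) + (a i - b j)"
    by (simp add: usc_map_def algebra_simps)
  then show ?thesis
    using norm_triangle_ineq[of "(1 / real k) *\<^sub>R (x - y)" "a i - b j"] by (simp add: dist_norm)
qed

lemma UN_usc_map_image_eq:
  "(\<Union>i<N. usc_map k c i ` A) = (\<Union>t\<in>c ` {..<N}. (\<lambda>x. (1 / real k) *\<^sub>R x + t) ` A)"
  by (auto simp: usc_map_def)

text \<open>Convergence in \<open>pt \<Rightarrow> pt\<close> is pointwise; evaluation at 0 recovers the translation
  vector.\<close>

lemma tendsto_usc_map_iff:
  "((\<lambda>n. usc_map k (a n) (j n)) \<longlongrightarrow> usc_map k b i) F \<longleftrightarrow> ((\<lambda>n. a n (j n)) \<longlongrightarrow> b i) F"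
proof
  assume "((\<lambda>n. usc_map k (a n) (j n)) \<longlongrightarrow> usc_map k b i) F"
  from continuous_on_tendsto_compose[OF continuous_on_product_coordinates this, of 0]
  show "((\<lambda>n. a n (j n)) \<longlongrightarrow> b i) F" by (simp add: usc_map_def o_def)
next
  define T :: "pt \<Rightarrow> pt \<Rightarrow> pt" where "T t = (\<lambda>x. (1 / real k) *\<^sub>R x + t)" for t
  have "continuous_on UNIV T"
    unfolding T_def by (intro continuous_on_coordinatewise_then_product continuous_intros)
  moreover assume "((\<lambda>n. a n (j n)) \<longlongrightarrow> b i) F"
  ultimately have "((\<lambda>n. T (a n (j n))) \<longlongrightarrow> T (b i)) F"
    by (rule continuous_on_tendsto_compose) auto
  then show "((\<lambda>n. usc_map k (a n) (j n)) \<longlongrightarrow> usc_map k b i) F"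
    by (simp add: T_def usc_map_def[abs_def])
qed

subsection \<open>Hausdorff distance\<close>

lemma hausdist_commute: "hausdist A B = hausdist B A"
  by (simp add: hausdist_def max.commute)

lemma infdist_le_hausdist:
  assumes "compact A" "a \<in> A"
  shows "infdist a B \<le> hausdist A B"
proof -
  have "compact ((\<lambda>a. infdist a B) ` A)"
    using assms(1) by (intro compact_continuous_image continuous_intros)
  then have "infdist a B \<le> (SUP a\<in>A. infdist a B)"
    using assms(2) by (intro cSUP_upper bounded_imp_bdd_above compact_imp_bounded)
  then show ?thesis unfolding hausdist_def by linarith
qed

lemma hausdist_nonneg:
  assumes "compact A" "A \<noteq> {}"
  shows "0 \<le> hausdist A B"
proof -
  obtain a where "a \<in> A" using assms(2) by blast
  then show ?thesis using infdist_le_hausdist[OF assms(1)] infdist_nonneg order_trans by metis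
qed

lemma hausdist_le:
  assumes "A \<noteq> {}" "B \<noteq> {}"
    and "\<And>a. a \<in> A \<Longrightarrow> infdist a B \<le> e" "\<And>b. b \<in> B \<Longrightarrow> infdist b A \<le> e"
  shows "hausdist A B \<le> e"
proof -
  have "(SUP a\<in>A. infdist a B) \<le> e" using assms(1,3) by (rule cSUP_least)
  moreover have "(SUP b\<in>B. infdist b A) \<le> e" using assms(2,4) by (rule cSUP_least)
  ultimately show ?thesis unfolding hausdist_def by simp
qed

lemma infdist_le_infdist_add_hausdist:
  assumes "compact A" "A \<noteq> {}"
  shows "infdist x B \<le> infdist x A + hausdist A B"
proof -
  obtain q where "q \<in> A" "infdist x A = dist x q"
    using infdist_attains_inf[OF compact_imp_closed[OF assms(1)] assms(2)] by blast
  then show ?thesis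
    using infdist_triangle[of x B q] infdist_le_hausdist[OF assms(1), of q B] by linarith
qed

lemma infdist_usc_map_image_le:
  assumes "compact A" "A \<noteq> {}"
  shows "infdist (usc_map k a i y) (usc_map k b j ` A) \<le> infdist y A / real k + dist (a i) (b j)"
proof -
  obtain z where "z \<in> A" "infdist y A = dist y z"
    using infdist_attains_inf[OF compact_imp_closed[OF assms(1)] assms(2)] by blast
  then have "infdist (usc_map k a i y) (usc_map k b j ` A) \<le> dist (usc_map k a i y) (usc_map k b j z)"
    by (intro infdist_le) auto
  then show ?thesis
    unfolding \<open>infdist y A = dist y z\<close> using dist_usc_map_le[of k a i y b j z] by linarith
qed

lemma infdist_usc_image_le:
  assumes "compact A" "compact B" "B \<noteq> {}"
    and x: "x \<in> (\<Union>i<N. usc_map k a i ` A)" and C: "(\<Union>i<N. usc_map k b i ` B) \<subseteq> C"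
  shows "infdist x C \<le> hausdist A B / real k + (\<Sum>i<N. dist (a i) (b i))"
proof -
  obtain i y where i: "i < N" and y: "y \<in> A" and x_eq: "x = usc_map k a i y"
    using x by blast
  have "infdist x C \<le> infdist x (usc_map k b i ` B)"
    using C i assms(3) by (intro infdist_mono) auto
  also have "\<dots> \<le> infdist y B / real k + dist (a i) (b i)"
    unfolding x_eq using assms(2,3) by (rule infdist_usc_map_image_le)
  also have "\<dots> \<le> hausdist A B / real k + (\<Sum>i<N. dist (a i) (b i))"
    using infdist_le_hausdist[OF assms(1) y] i
    by (intro add_mono divide_right_mono member_le_sum) auto
  finally show ?thesis .
qed

subsection \<open>Consequences of the USC conditions\<close>

definition cheb_dist :: "pt \<Rightarrow> pt \<Rightarrow> real" where
  "cheb_dist a b = max \<bar>fst a - fst b\<bar> \<bar>snd a - snd b\<bar>"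

lemma cheb_dist_self [simp]: "cheb_dist a a = 0"
  by (simp add: cheb_dist_def)

lemma tendsto_cheb_dist [tendsto_intros]:
  "(f \<longlongrightarrow> a) F \<Longrightarrow> (g \<longlongrightarrow> b) F \<Longrightarrow> ((\<lambda>n. cheb_dist (f n) (g n)) \<longlongrightarrow> cheb_dist a b) F"
  unfolding cheb_dist_def by (intro tendsto_intros)

lemma inj_on_if_cheb_separated:
  assumes "s > 0" "\<And>i j. i \<in> A \<Longrightarrow> j \<in> A \<Longrightarrow> i \<noteq> j \<Longrightarrow> s \<le> cheb_dist (c i) (c j)"
  shows "inj_on c A"
  using assms by (intro inj_onI) force

lemma usc_ifs_k_ge_3: "usc_ifs k N c \<Longrightarrow> 3 \<le> k"
  unfolding usc_ifs_def by simp

lemma usc_cell_subset_unit_square: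
  "usc_ifs k N c \<Longrightarrow> i < N \<Longrightarrow> usc_map k c i ` unit_square \<subseteq> unit_square"
  unfolding usc_ifs_def usc_cells_def by blast

lemma usc_translation_bounds:
  assumes "usc_ifs k N c" "i < N"
  shows "0 \<le> fst (c i)" "fst (c i) \<le> 1 - 1 / real k" "0 \<le> snd (c i)" "snd (c i) \<le> 1 - 1 / real k"
proof -
  have k: "k > 0" using usc_ifs_k_ge_3[OF assms(1)] by simp
  have "c i \<in> usc_map k c i ` unit_square" "c i + (1 / real k, 1 / real k) \<in> usc_map k c i ` unit_square"
    using k by (simp_all add: mem_usc_cell_iff)
  then have "c i \<in> unit_square" "c i + (1 / real k, 1 / real k) \<in> unit_square"
    using usc_cell_subset_unit_square[OF assms] by auto
  then show "0 \<le> fst (c i)" "fst (c i) \<le> 1 - 1 / real k" "0 \<le> snd (c i)" "snd (c i) \<le> 1 - 1 / real k"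
    by (auto simp: mem_unit_square_iff)
qed

lemma usc_translation_mem_unit_square:
  assumes "usc_ifs k N c" "i < N"
  shows "c i \<in> unit_square"
proof -
  have "0 \<le> 1 / real k" by simp
  then show ?thesis
    using usc_translation_bounds[OF assms] unfolding mem_unit_square_iff by linarith
qed

text \<open>Two cells overlapping in both coordinates would meet in a set with interior.\<close>

lemma usc_translations_separated:
  assumes "usc_ifs k N c" "i < N" "j < N" "i \<noteq> j"
  shows "1 / real k \<le> cheb_dist (c i) (c j)"
proof (rule ccontr)
  assume "\<not> ?thesis"
  then have close: "\<bar>fst (c i) - fst (c j)\<bar> < 1 / real k" "\<bar>snd (c i) - snd (c j)\<bar> < 1 / real k"
    by (auto simp: cheb_dist_def)
  have k: "k > 0" using usc_ifs_k_ge_3[OF assms(1)] by simp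
  define S where "S = usc_map k c i ` unit_square \<inter> usc_map k c j ` unit_square"
  define B where "B = {max (fst (c i)) (fst (c j)) <..< min (fst (c i)) (fst (c j)) + 1 / real k} \<times>
                      {max (snd (c i)) (snd (c j)) <..< min (snd (c i)) (snd (c j)) + 1 / real k}"
  have "B \<subseteq> S"
    unfolding B_def S_def using k by (auto simp: mem_usc_cell_iff)
  moreover have "open B" unfolding B_def by (intro open_Times) auto
  ultimately have "B \<subseteq> interior S" by (rule interior_maximal)
  moreover have "B \<noteq> {}" using close unfolding B_def by auto
  ultimately have "interior S \<noteq> {}" by blast
  moreover have "S = {} \<or> (\<exists>p. S = {p}) \<or> (\<exists>a b. a \<noteq> b \<and> S = closed_segment a b)"
    using assms unfolding usc_ifs_def S_def Let_def by blast
  moreover have "interior (closed_segment a b) = {}" for a b :: pt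
    by (rule interior_closed_segment_ge2) simp
  ultimately show False by auto
qed

lemma usc_corner_translations:
  assumes "usc_ifs k N c"
  obtains i j where "i < N" "c i = 0" "j < N" "c j = (1 - 1 / real k, 1 - 1 / real k)"
proof -
  have k: "k > 0" using usc_ifs_k_ge_3[OF assms] by simp
  have bottom: "{0..1} \<times> {0} \<subseteq> usc_cells k N c" using assms unfolding usc_ifs_def by blast
  then have "(0, 0) \<in> usc_cells k N c" by auto
  then obtain i where i: "i < N" "(0, 0) \<in> usc_map k c i ` unit_square"
    unfolding usc_cells_def by blast
  define g :: "pt \<Rightarrow> pt" where "g = (\<lambda>(x, y). (x, 1 - y))"
  have "g \<in> square_isometries" unfolding g_def square_isometries_def by blast
  then have "g ` usc_cells k N c = usc_cells k N c" using assms unfolding usc_ifs_def by blast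
  then have "(1, 1) \<in> usc_cells k N c"
    using bottom unfolding g_def by force
  then obtain j where j: "j < N" "(1, 1) \<in> usc_map k c j ` unit_square"
    unfolding usc_cells_def by blast
  show thesis
  proof
    show "c i = 0" "c j = (1 - 1 / real k, 1 - 1 / real k)"
      using i j usc_translation_bounds[OF assms i(1)] usc_translation_bounds[OF assms j(1)]
      by (auto simp: mem_usc_cell_iff[OF k] prod_eq_iff)
  qed (use i j in auto)
qed

subsection \<open>Attractors\<close>

lemma usc_attractor_fixed_point_mem:
  assumes att: "usc_attractor k N c K" and "2 \<le> k" "i < N" and fixed: "usc_map k c i p = p"
  shows "p \<in> K"
proof -
  have K: "compact K" "K \<noteq> {}" and K_eq: "K = (\<Union>i<N. usc_map k c i ` K)"
    using att unfolding usc_attractor_def by auto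
  have "infdist p K \<le> infdist p (usc_map k c i ` K)"
    using K_eq \<open>i < N\<close> K(2) by (intro infdist_mono) auto
  also have "\<dots> \<le> infdist p K / real k"
    using infdist_usc_map_image_le[OF K, of k c i p c i] fixed by simp
  finally have "infdist p K = 0"
    by (rule nonneg_le_div_self_imp_zero[OF infdist_nonneg _ \<open>2 \<le> k\<close>])
  then show ?thesis
    using in_closed_iff_infdist_zero[OF compact_imp_closed[OF K(1)] K(2)] by simp
qed

text \<open>Since the maps send Q into Q and contract by 1/k, the largest distance of a point of K
  from Q is at most 1/k times itself.\<close>

lemma usc_attractor_subset:
  assumes att: "usc_attractor k N c K" and "2 \<le> k" and Q: "compact Q" "Q \<noteq> {}"
    and Q_inv: "\<And>i. i < N \<Longrightarrow> usc_map k c i ` Q \<subseteq> Q"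
  shows "K \<subseteq> Q"
proof
  have K: "compact K" "K \<noteq> {}" and K_eq: "K = (\<Union>i<N. usc_map k c i ` K)"
    using att unfolding usc_attractor_def by auto
  have "continuous_on K (\<lambda>x. infdist x Q)" by (intro continuous_intros)
  then obtain p where p: "p \<in> K" and p_max: "\<And>x. x \<in> K \<Longrightarrow> infdist x Q \<le> infdist p Q"
    using continuous_attains_sup[OF K] by blast
  obtain i y where i: "i < N" and y: "y \<in> K" and p_eq: "p = usc_map k c i y"
    using p K_eq by blast
  have "infdist p Q \<le> infdist p (usc_map k c i ` Q)"
    using Q_inv[OF i] Q(2) by (intro infdist_mono) auto
  also have "\<dots> \<le> infdist y Q / real k"
    using infdist_usc_map_image_le[OF Q, of k c i y c i] p_eq by simp
  also have "\<dots> \<le> infdist p Q / real k"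
    using p_max[OF y] by (simp add: divide_right_mono)
  finally have "infdist p Q = 0"
    by (rule nonneg_le_div_self_imp_zero[OF infdist_nonneg _ \<open>2 \<le> k\<close>])
  fix x assume "x \<in> K"
  then have "infdist x Q = 0"
    using p_max infdist_nonneg[of x Q] \<open>infdist p Q = 0\<close> by (metis order_antisym)
  then show "x \<in> Q"
    using in_closed_iff_infdist_zero[OF compact_imp_closed[OF Q(1)] Q(2)] by simp
qed

lemma usc_attractor_subset_unit_square:
  assumes "usc_ifs k N c" "usc_attractor k N c K"
  shows "K \<subseteq> unit_square"
proof (rule usc_attractor_subset[OF assms(2)])
  show "2 \<le> k" using usc_ifs_k_ge_3[OF assms(1)] by simp
  show "compact unit_square" by (simp add: unit_square_def)
  have "(0, 0) \<in> unit_square" by (simp add: mem_unit_square_iff)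
  then show "unit_square \<noteq> {}" by blast
qed (rule usc_cell_subset_unit_square[OF assms(1)])

text \<open>The corner (1, 1) is a fixed point, and the map fixing the origin moves it along the
  diagonal.\<close>

lemma usc_attractor_diagonal_points:
  assumes "usc_ifs k N c" "usc_attractor k N c K"
  shows "((1 / real k) ^ m, (1 / real k) ^ m) \<in> K"
proof -
  obtain i j where i: "i < N" "c i = 0" and j: "j < N" "c j = (1 - 1 / real k, 1 - 1 / real k)"
    using usc_corner_translations[OF assms(1)] by blast
  show ?thesis
  proof (induction m)
    case 0
    have "usc_map k c j (1, 1) = (1, 1)" using j(2) by (simp add: usc_map_def)
    then show ?case
      using usc_attractor_fixed_point_mem[OF assms(2) _ j(1)] usc_ifs_k_ge_3[OF assms(1)] by simp
  next
    case (Suc m)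
    have "usc_map k c i ((1 / real k) ^ m, (1 / real k) ^ m) \<in> K"
      using Suc i(1) assms(2) unfolding usc_attractor_def by blast
    then show ?case using i(2) by (simp add: usc_map_def)
  qed
qed

subsection \<open>Rigidity of the translation vectors\<close>

text \<open>The points e + s^(m+1) (1, 1) of K approach the corner e from inside the cell e + s K; a
  cell t + s K covering them for large m has t below e in both coordinates and closer than s
  to e.\<close>

lemma translation_mem_if_lower_ones_far:
  fixes K C :: "pt set" and s :: real and e :: pt
  assumes s: "0 < s" "s < 1"
    and K_sub: "K \<subseteq> unit_square" and diag: "\<And>m. (s ^ m, s ^ m) \<in> K"
    and "finite C" and K_C: "K \<subseteq> (\<Union>t\<in>C. (\<lambda>x. s *\<^sub>R x + t) ` K)"
    and e: "(\<lambda>x. s *\<^sub>R x + e) ` K \<subseteq> K"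
    and far: "\<And>t. t \<in> C \<Longrightarrow> fst t + snd t < fst e + snd e \<Longrightarrow> s \<le> cheb_dist t e"
  shows "e \<in> C"
proof (rule ccontr)
  assume "e \<notin> C"
  define g where "g t = max (fst t - fst e) (snd t - snd e)" for t
  have "(\<lambda>m. s ^ Suc m) \<longlonglongrightarrow> 0"
    using LIMSEQ_power_zero[of s] s by (simp add: filterlim_sequentially_Suc)
  then have "\<forall>\<^sub>F m in sequentially. \<forall>t\<in>C. 0 < g t \<longrightarrow> s ^ Suc m < g t"
    by (intro eventually_ball_finite[OF \<open>finite C\<close>] ballI)
       (auto intro: eventually_mono[OF order_tendstoD(2)])
  then obtain m where m: "\<And>t. t \<in> C \<Longrightarrow> 0 < g t \<Longrightarrow> s ^ Suc m < g t"
    unfolding eventually_sequentially by blast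
  have "s *\<^sub>R (s ^ m, s ^ m) + e \<in> K" using diag e by blast
  then obtain t y where t: "t \<in> C" and y: "y \<in> K" and p_eq: "s *\<^sub>R (s ^ m, s ^ m) + e = s *\<^sub>R y + t"
    using K_C by blast
  have "0 \<le> fst y" "fst y \<le> 1" "0 \<le> snd y" "snd y \<le> 1"
    using y K_sub by (auto simp: mem_unit_square_iff)
  then have sy: "0 \<le> s * fst y" "s * fst y \<le> s" "0 \<le> s * snd y" "s * snd y \<le> s"
    using s by (auto intro: mult_left_le)
  have coords: "fst e - fst t = s * fst y - s ^ Suc m" "snd e - snd t = s * snd y - s ^ Suc m"
    using p_eq by (auto simp: prod_eq_iff algebra_simps)
  have "s ^ Suc m > 0" using s by simp
  then have "\<not> s ^ Suc m < g t"
    using coords sy unfolding g_def by auto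
  then have "g t \<le> 0" using m[OF t] by (meson not_less)
  then have below: "fst t \<le> fst e" "snd t \<le> snd e" unfolding g_def by simp_all
  moreover have "t \<noteq> e" using t \<open>e \<notin> C\<close> by blast
  ultimately have "fst t + snd t < fst e + snd e" by (auto simp: prod_eq_iff)
  then have "s \<le> cheb_dist t e" by (rule far[OF t])
  moreover have "\<bar>fst t - fst e\<bar> < s" "\<bar>snd t - snd e\<bar> < s"
    using coords sy below \<open>s ^ Suc m > 0\<close> by linarith+
  ultimately show False unfolding cheb_dist_def by simp
qed

text \<open>Apply the previous lemma to the element of the symmetric difference with least
  coordinate sum.\<close>

lemma translation_set_unique:
  fixes K C D :: "pt set" and s :: real
  assumes s: "0 < s" "s < 1"
    and K_sub: "K \<subseteq> unit_square" and diag: "\<And>m. (s ^ m, s ^ m) \<in> K"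
    and fin: "finite C" "finite D"
    and K_C: "K = (\<Union>t\<in>C. (\<lambda>x. s *\<^sub>R x + t) ` K)"
    and K_D: "K = (\<Union>t\<in>D. (\<lambda>x. s *\<^sub>R x + t) ` K)"
    and sep_C: "\<And>a b. a \<in> C \<Longrightarrow> b \<in> C \<Longrightarrow> a \<noteq> b \<Longrightarrow> s \<le> cheb_dist a b"
    and sep_D: "\<And>a b. a \<in> D \<Longrightarrow> b \<in> D \<Longrightarrow> a \<noteq> b \<Longrightarrow> s \<le> cheb_dist a b"
  shows "C = D"
proof (rule ccontr)
  assume "C \<noteq> D"
  define X where "X = (C - D) \<union> (D - C)"
  define h :: "pt \<Rightarrow> real" where "h t = fst t + snd t" for t
  define e where "e = arg_min_on h X"
  have X: "finite X" "X \<noteq> {}" using fin \<open>C \<noteq> D\<close> unfolding X_def by auto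
  have e: "e \<in> X" and e_min: "\<And>t. t \<in> X \<Longrightarrow> h e \<le> h t"
    unfolding e_def using arg_min_if_finite(1)[OF X] arg_min_least[OF X] by auto
  have shared: "e \<in> A"
    if "e \<in> B" "finite A" "K = (\<Union>t\<in>A. (\<lambda>x. s *\<^sub>R x + t) ` K)"
      "K = (\<Union>t\<in>B. (\<lambda>x. s *\<^sub>R x + t) ` K)"
      "\<And>a b. a \<in> B \<Longrightarrow> b \<in> B \<Longrightarrow> a \<noteq> b \<Longrightarrow> s \<le> cheb_dist a b" "A - B \<subseteq> X"
    for A B
  proof (rule translation_mem_if_lower_ones_far[OF s K_sub diag \<open>finite A\<close>])
    show "K \<subseteq> (\<Union>t\<in>A. (\<lambda>x. s *\<^sub>R x + t) ` K)" using that(3) by blast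
    show "(\<lambda>x. s *\<^sub>R x + e) ` K \<subseteq> K" using that(1,4) by blast
    fix t assume "t \<in> A" "fst t + snd t < fst e + snd e"
    then have "t \<in> B" "t \<noteq> e"
      using e_min[of t] that(6) unfolding h_def by force+
    then show "s \<le> cheb_dist t e" using that(1,5) by blast
  qed
  have "e \<in> C \<inter> D"
  proof (cases "e \<in> D")
    case True
    then show ?thesis using shared[of D C] fin K_C K_D sep_D unfolding X_def by auto
  next
    case False
    then have "e \<in> C" using e unfolding X_def by auto
    then show ?thesis using shared[of C D] fin K_C K_D sep_C unfolding X_def by auto
  qed
  then show False using e unfolding X_def by auto
qed

subsection \<open>Convergence\<close>

lemma hausdist_usc_attractors_le:
  assumes K: "usc_attractor k N c K" and L: "usc_attractor k N d L" and "2 \<le> k"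
  shows "hausdist L K \<le> real k / (real k - 1) * (\<Sum>i<N. dist (d i) (c i))"
proof -
  define h where "h = hausdist L K"
  define e where "e = (\<Sum>i<N. dist (d i) (c i))"
  have K': "compact K" "K \<noteq> {}" "K = (\<Union>i<N. usc_map k c i ` K)"
    and L': "compact L" "L \<noteq> {}" "L = (\<Union>i<N. usc_map k d i ` L)"
    using K L unfolding usc_attractor_def by auto
  have "h \<le> h / real k + e"
    unfolding h_def
  proof (rule hausdist_le[OF L'(2) K'(2)])
    fix x assume "x \<in> L"
    then show "infdist x K \<le> hausdist L K / real k + e"
      unfolding e_def using K' L' by (intro infdist_usc_image_le) auto
  next
    fix x assume "x \<in> K"
    then have "infdist x L \<le> hausdist K L / real k + (\<Sum>i<N. dist (c i) (d i))"
      using K' L' by (intro infdist_usc_image_le) auto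
    then show "infdist x L \<le> hausdist L K / real k + e"
      unfolding e_def by (simp add: hausdist_commute dist_commute)
  qed
  then have "h * (real k - 1) \<le> e * real k"
    using \<open>2 \<le> k\<close> by (simp add: field_simps)
  then show ?thesis
    unfolding h_def e_def using \<open>2 \<le> k\<close> by (simp add: field_simps)
qed

lemma usc_attractors_converge:
  assumes att: "usc_attractor k N c K" and "2 \<le> k"
    and seq: "\<And>n. usc_attractor k N (a n) (L n)"
    and lim: "\<And>i. i < N \<Longrightarrow> (\<lambda>n. a n i) \<longlonglongrightarrow> c i"
  shows "(\<lambda>n. hausdist (L n) K) \<longlonglongrightarrow> 0"
proof (rule tendsto_sandwich[OF _ _ tendsto_const])
  have "0 \<le> hausdist (L n) K" for n
    using seq[of n] hausdist_nonneg unfolding usc_attractor_def by blast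
  then show "\<forall>\<^sub>F n in sequentially. 0 \<le> hausdist (L n) K" by simp
  show "\<forall>\<^sub>F n in sequentially. hausdist (L n) K \<le> real k / (real k - 1) * (\<Sum>i<N. dist (a n i) (c i))"
    using hausdist_usc_attractors_le[OF att seq \<open>2 \<le> k\<close>] by simp
  have "(\<lambda>n. real k / (real k - 1) * (\<Sum>i<N. dist (a n i) (c i)))
      \<longlonglongrightarrow> real k / (real k - 1) * (\<Sum>i<N. dist (c i) (c i))"
    by (intro tendsto_intros lim) auto
  then show "(\<lambda>n. real k / (real k - 1) * (\<Sum>i<N. dist (a n i) (c i))) \<longlonglongrightarrow> 0" by simp
qed

lemma usc_attractor_limit:
  assumes K: "compact K" "K \<noteq> {}"
    and att: "\<And>n. usc_attractor k N (a n) (L n)"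
    and hd: "(\<lambda>n. hausdist (L n) K) \<longlonglongrightarrow> 0"
    and lim: "\<And>i. i < N \<Longrightarrow> (\<lambda>n. a n i) \<longlonglongrightarrow> b i"
  shows "K = (\<Union>i<N. usc_map k b i ` K)"
proof -
  define U where "U = (\<Union>i<N. usc_map k b i ` K)"
  define err where
    "err n = hausdist (L n) K + hausdist (L n) K / real k + (\<Sum>i<N. dist (a n i) (b i))" for n
  have L: "compact (L n)" "L n \<noteq> {}" "L n = (\<Union>i<N. usc_map k (a n) i ` L n)" for n
    using att[of n] unfolding usc_attractor_def by auto
  have err: "err \<longlonglongrightarrow> 0"
  proof -
    have "err \<longlonglongrightarrow> 0 + 0 + (\<Sum>i<N. dist (b i) (b i))"
      unfolding err_def by (intro tendsto_add tendsto_divide_zero tendsto_sum tendsto_dist hd lim) auto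
    then show ?thesis by simp
  qed
  have "N \<noteq> 0" using L(2,3)[of 0] by auto
  then have U: "closed U" "U \<noteq> {}"
    unfolding U_def using K
    by (auto intro!: compact_imp_closed compact_UN compact_continuous_image
             simp: usc_map_def[abs_def] continuous_intros)
  have "p \<in> U" if p: "p \<in> K" for p
  proof (rule mem_closed_if_infdist_le_null[OF U _ err])
    fix n
    obtain q where q: "q \<in> L n" "infdist p (L n) = dist p q"
      using infdist_attains_inf[OF compact_imp_closed[OF L(1)] L(2)] by blast
    have "infdist q U \<le> hausdist (L n) K / real k + (\<Sum>i<N. dist (a n i) (b i))"
      unfolding U_def using q(1) L[of n] K by (intro infdist_usc_image_le) auto
    moreover have "dist p q \<le> hausdist (L n) K"
      using infdist_le_hausdist[OF K(1) p, of "L n"] q(2) by (simp add: hausdist_commute)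
    ultimately show "infdist p U \<le> err n"
      unfolding err_def using infdist_triangle[of p U q] by linarith
  qed
  moreover have "p \<in> K" if p: "p \<in> U" for p
  proof (rule mem_closed_if_infdist_le_null[OF compact_imp_closed[OF K(1)] K(2) _ err])
    fix n
    have "infdist p (L n) \<le> hausdist K (L n) / real k + (\<Sum>i<N. dist (b i) (a n i))"
      using p L[of n] K unfolding U_def by (intro infdist_usc_image_le) auto
    then have "infdist p (L n) \<le> hausdist (L n) K / real k + (\<Sum>i<N. dist (a n i) (b i))"
      by (simp add: hausdist_commute dist_commute)
    then show "infdist p K \<le> err n"
      unfolding err_def using infdist_le_infdist_add_hausdist[OF L(1,2)[of n], of p K] by linarith
  qed
  ultimately show ?thesis unfolding U_def by blast
qed

definition matching_cost :: "nat \<Rightarrow> (nat \<Rightarrow> pt) \<Rightarrow> (nat \<Rightarrow> pt) \<Rightarrow> (nat \<Rightarrow> nat) \<Rightarrow> real" where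
  "matching_cost N a b p = (\<Sum>i<N. dist (a (p i)) (b i))"

definition best_matching :: "nat \<Rightarrow> (nat \<Rightarrow> pt) \<Rightarrow> (nat \<Rightarrow> pt) \<Rightarrow> nat \<Rightarrow> nat" where
  "best_matching N a b = arg_min_on (matching_cost N a b) {p. p permutes {..<N}}"

lemma
  shows best_matching_permutes: "best_matching N a b permutes {..<N}"
    and best_matching_le:
      "p permutes {..<N} \<Longrightarrow> matching_cost N a b (best_matching N a b) \<le> matching_cost N a b p"
proof -
  have "id \<in> {p. p permutes {..<N}}" by (simp add: permutes_id)
  then have P: "finite {p. p permutes {..<N}}" "{p. p permutes {..<N}} \<noteq> {}"
    using finite_permutations[of "{..<N}"] by blast+
  show "best_matching N a b permutes {..<N}"
    using arg_min_if_finite(1)[OF P] unfolding best_matching_def by simp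
  show "matching_cost N a b (best_matching N a b) \<le> matching_cost N a b p" if "p permutes {..<N}"
    using arg_min_least[OF P] that unfolding best_matching_def by simp
qed

lemma dist_le_matching_cost: "i < N \<Longrightarrow> dist (a (p i)) (b i) \<le> matching_cost N a b p"
  unfolding matching_cost_def by (rule member_le_sum) auto

lemma matching_cost_nonneg: "0 \<le> matching_cost N a b p"
  unfolding matching_cost_def by (simp add: sum_nonneg)

lemma usc_limit_translations_permute:
  assumes ifs: "usc_ifs k N c" and att: "usc_attractor k N c K"
    and seq: "\<And>n. usc_ifs k N (a n) \<and> usc_attractor k N (a n) (L n)"
    and hd: "(\<lambda>n. hausdist (L n) K) \<longlonglongrightarrow> 0"
    and lim: "\<And>i. i < N \<Longrightarrow> (\<lambda>n. a n i) \<longlonglongrightarrow> d i"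
  obtains \<tau> where "\<tau> permutes {..<N}" "\<And>i. i < N \<Longrightarrow> d (\<tau> i) = c i"
proof -
  define s where "s = 1 / real k"
  have s: "0 < s" "s < 1" using usc_ifs_k_ge_3[OF ifs] by (auto simp: s_def)
  have K: "compact K" "K \<noteq> {}" "K = (\<Union>i<N. usc_map k c i ` K)"
    using att unfolding usc_attractor_def by auto
  have K_d: "K = (\<Union>i<N. usc_map k d i ` K)"
    by (rule usc_attractor_limit[OF K(1,2) _ hd lim]) (use seq in blast)+
  have sep_c: "s \<le> cheb_dist (c i) (c j)" if "i < N" "j < N" "i \<noteq> j" for i j
    unfolding s_def using usc_translations_separated[OF ifs that] .
  have sep_d: "s \<le> cheb_dist (d i) (d j)" if "i < N" "j < N" "i \<noteq> j" for i j
  proof (rule LIMSEQ_le_const[OF tendsto_cheb_dist[OF lim lim]])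
    show "\<exists>M. \<forall>n\<ge>M. s \<le> cheb_dist (a n i) (a n j)"
      unfolding s_def using usc_translations_separated[OF _ that] seq by blast
  qed (use that in auto)
  have "inj_on c {..<N}" "inj_on d {..<N}"
    using sep_c sep_d s(1) by (auto intro: inj_on_if_cheb_separated)
  moreover have "c ` {..<N} = d ` {..<N}"
  proof (rule translation_set_unique[OF s])
    show "K \<subseteq> unit_square" by (rule usc_attractor_subset_unit_square[OF ifs att])
    show "(s ^ m, s ^ m) \<in> K" for m
      unfolding s_def by (rule usc_attractor_diagonal_points[OF ifs att])
    show "K = (\<Union>t\<in>c ` {..<N}. (\<lambda>x. s *\<^sub>R x + t) ` K)"
      using K(3) unfolding s_def UN_usc_map_image_eq .
    show "K = (\<Union>t\<in>d ` {..<N}. (\<lambda>x. s *\<^sub>R x + t) ` K)"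
      using K_d unfolding s_def UN_usc_map_image_eq .
    show "finite (c ` {..<N})" "finite (d ` {..<N})" by simp_all
  qed (use sep_c sep_d in blast)+
  ultimately obtain \<tau> where "\<tau> permutes {..<N}" "\<And>i. i \<in> {..<N} \<Longrightarrow> d (\<tau> i) = c i"
    by (rule permutation_matching_images) blast
  then show thesis using that by simp
qed

text \<open>Along a subsequence on which the translation vectors converge, the limit is a permutation
  of the vectors of K, so the cost of the best matching tends to 0 along it.\<close>

lemma best_matching_cost_tendsto_0:
  assumes ifs: "usc_ifs k N c" and att: "usc_attractor k N c K"
    and seq: "\<And>n. usc_ifs k N (a n) \<and> usc_attractor k N (a n) (L n)"
    and hd: "(\<lambda>n. hausdist (L n) K) \<longlonglongrightarrow> 0"
  shows "(\<lambda>n. matching_cost N (a n) c (best_matching N (a n) c)) \<longlonglongrightarrow> 0"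
    (is "?cost \<longlonglongrightarrow> 0")
proof (rule LIMSEQ_if_subseqs_have_LIMSEQ_subseq)
  fix r :: "nat \<Rightarrow> nat" assume r: "strict_mono r"
  have "seq_compact unit_square"
    unfolding unit_square_def by (simp add: compact_imp_seq_compact)
  then obtain r' d where r': "strict_mono r'"
    and lim: "\<forall>i<N. (\<lambda>n. a (r (r' n)) i) \<longlonglongrightarrow> d i"
    using finite_family_convergent_subseq[of unit_square N "\<lambda>n. a (r n)"]
      usc_translation_mem_unit_square seq by blast
  have hd_sub: "(\<lambda>n. hausdist (L (r (r' n))) K) \<longlonglongrightarrow> 0"
    using LIMSEQ_subseq_LIMSEQ[OF hd strict_mono_o[OF r r']] by (simp add: o_def)
  have seq_sub: "usc_ifs k N (a (r (r' n))) \<and> usc_attractor k N (a (r (r' n))) (L (r (r' n)))"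
    for n using seq .
  have lim_sub: "\<And>i. i < N \<Longrightarrow> (\<lambda>n. a (r (r' n)) i) \<longlonglongrightarrow> d i" using lim by blast
  obtain \<tau> where \<tau>: "\<tau> permutes {..<N}" "\<And>i. i < N \<Longrightarrow> d (\<tau> i) = c i"
    using usc_limit_translations_permute[OF ifs att seq_sub hd_sub lim_sub] by blast
  have "(\<lambda>n. matching_cost N (a (r (r' n))) c \<tau>) \<longlonglongrightarrow> matching_cost N d c \<tau>"
    unfolding matching_cost_def using lim permutes_in_image[OF \<tau>(1)]
    by (intro tendsto_intros) auto
  moreover have "matching_cost N d c \<tau> = 0"
    using \<tau>(2) by (simp add: matching_cost_def)
  ultimately have \<tau>_lim: "(\<lambda>n. matching_cost N (a (r (r' n))) c \<tau>) \<longlonglongrightarrow> 0" by simp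
  have "(\<lambda>n. ?cost (r (r' n))) \<longlonglongrightarrow> 0"
  proof (rule tendsto_sandwich[OF _ _ tendsto_const \<tau>_lim])
    show "\<forall>\<^sub>F n in sequentially. 0 \<le> ?cost (r (r' n))"
      by (simp add: matching_cost_nonneg)
    show "\<forall>\<^sub>F n in sequentially. ?cost (r (r' n)) \<le> matching_cost N (a (r (r' n))) c \<tau>"
      by (simp add: best_matching_le[OF \<tau>(1)])
  qed
  then show "\<exists>r'. strict_mono r' \<and> (?cost \<circ> r \<circ> r') \<longlonglongrightarrow> 0"
    using r' by (auto simp: o_def)
qed

lemma usc_translations_converge_up_to_permutation:
  assumes "usc_ifs k N c" "usc_attractor k N c K"
    and "\<And>n. usc_ifs k N (a n) \<and> usc_attractor k N (a n) (L n)"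
    and "(\<lambda>n. hausdist (L n) K) \<longlonglongrightarrow> 0"
  obtains \<sigma> where "\<And>n. \<sigma> n permutes {..<N}" "\<And>i. i < N \<Longrightarrow> (\<lambda>n. a n (\<sigma> n i)) \<longlonglongrightarrow> c i"
proof
  define \<sigma> where "\<sigma> n = best_matching N (a n) c" for n
  show "\<sigma> n permutes {..<N}" for n
    unfolding \<sigma>_def by (rule best_matching_permutes)
  fix i assume "i < N"
  have "(\<lambda>n. dist (a n (\<sigma> n i)) (c i)) \<longlonglongrightarrow> 0"
  proof (rule tendsto_sandwich[OF _ _ tendsto_const best_matching_cost_tendsto_0[OF assms]])
    show "\<forall>\<^sub>F n in sequentially. 0 \<le> dist (a n (\<sigma> n i)) (c i)" by simp
    show "\<forall>\<^sub>F n in sequentially.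
        dist (a n (\<sigma> n i)) (c i) \<le> matching_cost N (a n) c (best_matching N (a n) c)"
      unfolding \<sigma>_def using dist_le_matching_cost[OF \<open>i < N\<close>] by simp
  qed
  then show "(\<lambda>n. a n (\<sigma> n i)) \<longlonglongrightarrow> c i" by (rule tendsto_dist_iff[THEN iffD2])
qed

text \<open>The hypotheses on K_n only hold for n \<ge> 1, so the lemmas above are applied to the
  sequences shifted by one.\<close>

theorem lemma7p2:
  fixes k N :: nat and c :: "nat \<Rightarrow> pt" and cn :: "nat \<Rightarrow> nat \<Rightarrow> pt"
    and K :: "pt set" and Kn :: "nat \<Rightarrow> pt set"
  assumes "usc_ifs k N c" and "usc_attractor k N c K"
    and "\<And>n. n \<ge> 1 \<Longrightarrow> usc_ifs k N (cn n) \<and> usc_attractor k N (cn n) (Kn n)"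
  shows "((\<forall>i<N. (\<lambda>n. usc_map k (cn n) i) \<longlonglongrightarrow> usc_map k c i)
            \<longrightarrow> (\<lambda>n. hausdist (Kn n) K) \<longlonglongrightarrow> 0)
       \<and> ((\<lambda>n. hausdist (Kn n) K) \<longlonglongrightarrow> 0
            \<longrightarrow> (\<exists>\<sigma>. (\<forall>n. \<sigma> n permutes {..<N}) \<and>
                 (\<forall>i<N. (\<lambda>n. usc_map k (cn n) (\<sigma> n i)) \<longlonglongrightarrow> usc_map k c i)))"
proof -
  define a where "a n = cn (Suc n)" for n
  define L where "L n = Kn (Suc n)" for n
  have seq: "usc_ifs k N (a n) \<and> usc_attractor k N (a n) (L n)" for n
    unfolding a_def L_def using assms(3) by simp
  have hd_shift: "(\<lambda>n. hausdist (L n) K) \<longlonglongrightarrow> 0 \<longleftrightarrow> (\<lambda>n. hausdist (Kn n) K) \<longlonglongrightarrow> 0"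
    unfolding L_def by (rule filterlim_sequentially_Suc)
  have map_shift: "(\<lambda>n. usc_map k (cn n) (j n)) \<longlonglongrightarrow> usc_map k c i
      \<longleftrightarrow> (\<lambda>n. a n (j (Suc n))) \<longlonglongrightarrow> c i" for j i
    unfolding tendsto_usc_map_iff a_def by (rule filterlim_sequentially_Suc[symmetric])
  show ?thesis
  proof (intro conjI impI)
    assume "\<forall>i<N. (\<lambda>n. usc_map k (cn n) i) \<longlonglongrightarrow> usc_map k c i"
    then have "(\<lambda>n. a n i) \<longlonglongrightarrow> c i" if "i < N" for i
      using map_shift[of "\<lambda>_. i" i] that by simp
    then show "(\<lambda>n. hausdist (Kn n) K) \<longlonglongrightarrow> 0"
      using usc_attractors_converge[where a = a and L = L, OF assms(2) _ conjunct2[OF seq]]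
        usc_ifs_k_ge_3[OF assms(1)] hd_shift by simp
  next
    assume "(\<lambda>n. hausdist (Kn n) K) \<longlonglongrightarrow> 0"
    then obtain \<sigma> where \<sigma>: "\<And>n. \<sigma> n permutes {..<N}" "\<And>i. i < N \<Longrightarrow> (\<lambda>n. a n (\<sigma> n i)) \<longlonglongrightarrow> c i"
      using usc_translations_converge_up_to_permutation[where a = a and L = L, OF assms(1,2) seq]
        hd_shift by blast
    define \<sigma>' where "\<sigma>' n = (if n = 0 then id else \<sigma> (n - 1))" for n
    have "\<sigma>' n permutes {..<N}" for n
      using \<sigma>(1) permutes_id by (simp add: \<sigma>'_def)
    moreover have "(\<lambda>n. usc_map k (cn n) (\<sigma>' n i)) \<longlonglongrightarrow> usc_map k c i" if "i < N" for i
      using map_shift[of "\<lambda>n. \<sigma>' n i" i] \<sigma>(2)[OF that] by (simp add: \<sigma>'_def)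
    ultimately show "\<exists>\<sigma>. (\<forall>n. \<sigma> n permutes {..<N}) \<and>
        (\<forall>i<N. (\<lambda>n. usc_map k (cn n) (\<sigma> n i)) \<longlonglongrightarrow> usc_map k c i)" by blast
  qed
qed

end
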